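(* Let $\mathcal N=(G,\beta,r)$ be a potential-based flow network with $G=(V,A)$, let $T^+,T^-\subseteq V$ be disjoint, $T=T^+\cup T^-$, and let $b\in B(T)$. Let $f$ be a potential-based $b$-transshipment with corresponding node potentials $\pi\in[0,\bar\pi]^V$, where $\bar\pi>0$. Then for every $X\subseteq T$ with $b(X)\ge0$ there is a potential-based $b'$-transshipment $f'$ in $\mathcal N$, for some balanced $b'\in\mathbb{R}^V$, with corresponding potentials $\pi'\in[0,\bar\pi]^V$, such that $$\{v: b'_v>0\}\subseteq T^+\cap X,\qquad \{v:b'_v<0\}\subseteq T^-\setminus X,\qquad \sum_{v\in T^+\cap X}b'_v=b(X).$$
   Context: A potential-based flow network $\mathcal N=(G,\beta,r)$ consists of a weakly connected directed multigraph $G=(V,A)$ without loops, resistances $\beta\in\mathbb{R}^A_{>0}$ and a degree $r>0$. For a balanced vector $b\in\mathbb{R}^V$ ($\sum_v b_v=0$), a potential-based $b$-transshipment is a flow $f\in\mathbb{R}^A$ together with potentials $\pi\in\mathbb{R}^V$ such that $\pi_u-\pi_v=\beta_a\,\mathrm{sign}(f_a)|f_a|^r$ for every arc $a=(u,v)$ and $\sum_{a\in\delta^+(v)}f_a-\sum_{a\in\delta^-(v)}f_a=b_v$ for all $v\in V$ ($\delta^+(v)$, $\delta^-(v)$: arcs leaving, resp. entering, $v$). $B(T)$ is the set of balanced $b\in\mathbb{R}^V$ with $b_v\ge0$ for $v\in T^+$, $b_v\le0$ for $v\in T^-$, and $b_v=0$ for $v\notin T$. For $X\subseteq T$, $b(X)=\sum_{v\in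 X}b_v$. *)

theory Defs
  imports Complex_Main
begin

text \<open>Vectors in R^V are functions on the node type (only values on V matter),
 vectors in R^A are functions on the arc type.\<close>

definition weakly_connected :: "'v set \<Rightarrow> 'e set \<Rightarrow> ('e \<Rightarrow> 'v) \<Rightarrow> ('e \<Rightarrow> 'v) \<Rightarrow> bool" where
  "weakly_connected V A tail head \<longleftrightarrow>
     (\<forall>u\<in>V. \<forall>v\<in>V. (u, v) \<in> ({(tail a, head a) | a. a \<in> A} \<union> {(head a, tail a) | a. a \<in> A})\<^sup>*)"

definition pb_network ::
  "'v set \<Rightarrow> 'e set \<Rightarrow> ('e \<Rightarrow> 'v) \<Rightarrow> ('e \<Rightarrow> 'v) \<Rightarrow> ('e \<Rightarrow> real) \<Rightarrow> real \<Rightarrow> bool" where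
  "pb_network V A tail head \<beta> r \<longleftrightarrow>
     finite V \<and> finite A \<and>
     (\<forall>a\<in>A. tail a \<in> V \<and> head a \<in> V \<and> tail a \<noteq> head a) \<and>
     weakly_connected V A tail head \<and>
     (\<forall>a\<in>A. \<beta> a > 0) \<and> r > 0"

definition balanced :: "'v set \<Rightarrow> ('v \<Rightarrow> real) \<Rightarrow> bool" where
  "balanced V b \<longleftrightarrow> (\<Sum>v\<in>V. b v) = 0"

definition B_T :: "'v set \<Rightarrow> 'v set \<Rightarrow> 'v set \<Rightarrow> ('v \<Rightarrow> real) set" where
  "B_T V Tp Tm = {b. balanced V b \<and> (\<forall>v\<in>Tp. b v \<ge> 0) \<and> (\<forall>v\<in>Tm. b v \<le> 0)
                    \<and> (\<forall>v\<in>V - (Tp \<union> Tm). b v = 0)}"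

definition pb_transshipment ::
  "'v set \<Rightarrow> 'e set \<Rightarrow> ('e \<Rightarrow> 'v) \<Rightarrow> ('e \<Rightarrow> 'v) \<Rightarrow> ('e \<Rightarrow> real) \<Rightarrow> real \<Rightarrow>
   ('v \<Rightarrow> real) \<Rightarrow> ('e \<Rightarrow> real) \<Rightarrow> ('v \<Rightarrow> real) \<Rightarrow> bool" where
  "pb_transshipment V A tail head \<beta> r b f \<pi> \<longleftrightarrow>
     (\<forall>a\<in>A. \<pi> (tail a) - \<pi> (head a) = \<beta> a * (sgn (f a) * \<bar>f a\<bar> powr r)) \<and>
     (\<forall>v\<in>V. (\<Sum>a\<in>{a\<in>A. tail a = v}. f a) - (\<Sum>a\<in>{a\<in>A. head a = v}. f a) = b v)"

end

theory Submission
  imports Defs "HOL-Analysis.Analysis"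
begin

(* Let S = T+ \<inter> X and D = T- - X. Perron's method gives potentials \<phi> in [0, \<pi>bar]^V with
   \<phi> = \<pi>bar on S, \<phi> = 0 on D and flow conservation everywhere else; by the maximum principle
   the induced flow has its sources in S and its sinks in D. Comparing \<pi> with \<phi> on the cut
   L = {v \<notin> D. \<pi> v \<le> \<phi> v}, which contains S, shows that the amount c that \<phi> ships out of S is
   at least b(X). Flows are positively homogeneous of degree 1/r in the potentials, so scaling
   \<phi> by (b(X) / c) powr r yields the required transshipment. *)

definition arc_flow :: "real \<Rightarrow> real \<Rightarrow> real \<Rightarrow> real" where
  "arc_flow c r d = sgn d * (\<bar>d\<bar> / c) powr (1 / r)"

lemma arc_flow_0 [simp]: "arc_flow c r 0 = 0"
  by (simp add: arc_flow_def)

lemma arc_flow_eq_iff: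
  assumes c: "c > 0" and r: "r > 0"
  shows "d = c * (sgn x * \<bar>x\<bar> powr r) \<longleftrightarrow> x = arc_flow c r d"
proof
  assume d: "d = c * (sgn x * \<bar>x\<bar> powr r)"
  show "x = arc_flow c r d"
  proof (cases "x = 0")
    case False
    then have "sgn d = sgn x" and "\<bar>d\<bar> / c = \<bar>x\<bar> powr r"
      using d c by (simp_all add: sgn_mult abs_mult)
    moreover have "(\<bar>x\<bar> powr r) powr (1 / r) = \<bar>x\<bar>"
      using r by (simp add: powr_powr)
    ultimately show ?thesis
      by (simp add: arc_flow_def sgn_mult_abs)
  qed (use d in simp)
next
  assume x: "x = arc_flow c r d"
  show "d = c * (sgn x * \<bar>x\<bar> powr r)"
  proof (cases "d = 0")
    case False
    then have pos: "(\<bar>d\<bar> / c) powr (1 / r) > 0"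
      using c by simp
    then have "sgn x = sgn d" and "\<bar>x\<bar> = (\<bar>d\<bar> / c) powr (1 / r)"
      using x by (simp_all add: arc_flow_def sgn_mult abs_mult)
    moreover have "((\<bar>d\<bar> / c) powr (1 / r)) powr r = \<bar>d\<bar> / c"
      using r c by (simp add: powr_powr)
    ultimately show ?thesis
      using c by (simp add: sgn_mult_abs)
  qed (use x in simp)
qed

lemma arc_flow_mono:
  assumes c: "c > 0" and r: "r > 0" and xy: "x \<le> y"
  shows "arc_flow c r x \<le> arc_flow c r y"
proof -
  have root_mono: "(s / c) powr (1 / r) \<le> (t / c) powr (1 / r)" if "0 \<le> s" "s \<le> t" for s t
    using that c r by (intro powr_mono2) (auto simp: divide_right_mono)
  consider "0 \<le> x" | "x < 0" "0 \<le> y" | "y < 0"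
    using xy by linarith
  then show ?thesis
  proof cases
    case 1
    then show ?thesis
      using root_mono[of x y] xy by (auto simp: arc_flow_def sgn_if)
  next
    case 2
    then show ?thesis
      by (auto simp: arc_flow_def sgn_if intro: order_trans[of _ 0])
  next
    case 3
    then show ?thesis
      using root_mono[of "- y" "- x"] xy by (auto simp: arc_flow_def sgn_if)
  qed
qed

lemma arc_flow_scale:
  assumes c: "c > 0" and r: "r > 0" and \<mu>: "0 \<le> \<mu>"
  shows "arc_flow c r (\<mu> powr r * d) = \<mu> * arc_flow c r d"
proof (cases "\<mu> = 0")
  case False
  define x where "x = arc_flow c r d"
  have "d = c * (sgn x * \<bar>x\<bar> powr r)"
    using arc_flow_eq_iff[OF c r] x_def by blast
  then have "\<mu> powr r * d = c * (sgn (\<mu> * x) * \<bar>\<mu> * x\<bar> powr r)"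
    using False \<mu> by (simp add: sgn_mult abs_mult powr_mult)
  then have "\<mu> * x = arc_flow c r (\<mu> powr r * d)"
    using arc_flow_eq_iff[OF c r] by blast
  then show ?thesis
    by (simp add: x_def)
qed simp

lemma continuous_on_arc_flow:
  assumes c: "c > 0" and r: "r > 0"
  shows "continuous_on UNIV (arc_flow c r)"
proof -
  have "continuous_on {0..} (\<lambda>d. (d / c) powr (1 / r))"
    using c r by (intro continuous_on_powr' continuous_intros) auto
  then have nonneg: "continuous_on {0..} (arc_flow c r)"
    by (rule continuous_on_eq) (auto simp: arc_flow_def sgn_if)
  have "continuous_on {..0} (\<lambda>d. - ((- d / c) powr (1 / r)))"
    using c r by (intro continuous_on_minus continuous_on_powr' continuous_intros)
      (auto simp: divide_nonpos_pos)
  then have nonpos: "continuous_on {..0} (arc_flow c r)"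
    by (rule continuous_on_eq) (auto simp: arc_flow_def sgn_if)
  have "continuous_on ({0..} \<union> {..0}) (arc_flow c r)"
    by (rule continuous_on_closed_Un[OF _ _ nonneg nonpos]) auto
  moreover have "{0..} \<union> {..0::real} = UNIV"
    by auto
  ultimately show ?thesis
    by simp
qed

lemma compact_PiE_UNIV:
  fixes K :: "'a \<Rightarrow> real set"
  assumes "\<And>i. compact (K i)"
  shows "compact (Pi\<^sub>E UNIV K)"
proof -
  have "compactin (product_topology (\<lambda>i. euclidean) UNIV) (Pi\<^sub>E UNIV K)"
    using assms by (simp add: compactin_PiE)
  then show ?thesis
    by (simp add: euclidean_product_topology)
qed

lemma B_T_sum_le_sum:
  assumes b: "b \<in> B_T V Tp Tm" and fin: "finite L" "finite X"
    and LV: "L \<subseteq> V" and XT: "X \<subseteq> Tp \<union> Tm"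
    and sources: "Tp \<inter> X \<subseteq> L" and sinks: "L \<inter> (Tm - X) = {}"
  shows "(\<Sum>v\<in>X. b v) \<le> (\<Sum>v\<in>L. b v)"
proof -
  have "(\<Sum>v\<in>X - L. b v) \<le> 0"
    using b XT sources by (intro sum_nonpos) (auto simp: B_T_def)
  moreover have "0 \<le> b v" if "v \<in> L - X" for v
  proof -
    have "v \<in> V" "v \<notin> Tm"
      using that LV sinks by auto
    then show ?thesis
      using b by (cases "v \<in> Tp") (auto simp: B_T_def)
  qed
  then have "0 \<le> (\<Sum>v\<in>L - X. b v)"
    by (rule sum_nonneg)
  ultimately show ?thesis
    using sum.Int_Diff[OF fin(2), of b L] sum.Int_Diff[OF fin(1), of b X]
    by (simp add: Int_commute)
qed

locale potential_network =
  fixes V :: "'v set" and A :: "'e set" and tail head :: "'e \<Rightarrow> 'v"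
    and \<beta> :: "'e \<Rightarrow> real" and r :: real
  assumes finite_nodes: "finite V" and finite_arcs: "finite A"
    and tail_in_nodes: "a \<in> A \<Longrightarrow> tail a \<in> V" and head_in_nodes: "a \<in> A \<Longrightarrow> head a \<in> V"
    and resistance_pos: "a \<in> A \<Longrightarrow> \<beta> a > 0" and degree_pos: "r > 0"

lemma pb_network_imp_potential_network:
  "pb_network V A tail head \<beta> r \<Longrightarrow> potential_network V A tail head \<beta> r"
  by unfold_locales (auto simp: pb_network_def)

context potential_network
begin

definition net_outflow :: "('e \<Rightarrow> real) \<Rightarrow> 'v \<Rightarrow> real" where
  "net_outflow f v = (\<Sum>a\<in>{a\<in>A. tail a = v}. f a) - (\<Sum>a\<in>{a\<in>A. head a = v}. f a)"

definition potential_flow :: "('v \<Rightarrow> real) \<Rightarrow> 'e \<Rightarrow> real" where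
  "potential_flow \<psi> a = arc_flow (\<beta> a) r (\<psi> (tail a) - \<psi> (head a))"

abbreviation potential_outflow :: "('v \<Rightarrow> real) \<Rightarrow> 'v \<Rightarrow> real" where
  "potential_outflow \<psi> \<equiv> net_outflow (potential_flow \<psi>)"

lemma net_outflow_cong: "(\<And>a. a \<in> A \<Longrightarrow> f a = g a) \<Longrightarrow> net_outflow f v = net_outflow g v"
  unfolding net_outflow_def by (intro arg_cong2[where f = minus] sum.cong) auto

lemma sum_net_outflow:
  assumes "finite L"
  shows "(\<Sum>v\<in>L. net_outflow f v)
       = (\<Sum>a\<in>A. (if tail a \<in> L then f a else 0) - (if head a \<in> L then f a else 0))"
proof -
  have sum_end: "(\<Sum>v\<in>L. \<Sum>a\<in>{a\<in>A. g a = v}. f a) = (\<Sum>a\<in>A. if g a \<in> L then f a else 0)"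
    for g :: "'e \<Rightarrow> 'v"
  proof -
    have "(\<Sum>v\<in>L. \<Sum>a\<in>{a\<in>A. g a = v}. f a) = (\<Sum>v\<in>L. \<Sum>a\<in>A. if g a = v then f a else 0)"
      using finite_arcs by (simp add: sum.inter_filter)
    also have "\<dots> = (\<Sum>a\<in>A. \<Sum>v\<in>L. if g a = v then f a else 0)"
      by (rule sum.swap)
    also have "\<dots> = (\<Sum>a\<in>A. if g a \<in> L then f a else 0)"
      using assms by simp
    finally show ?thesis .
  qed
  show ?thesis
    unfolding net_outflow_def by (simp add: sum_subtractf sum_end)
qed

lemma sum_net_outflow_nodes: "(\<Sum>v\<in>V. net_outflow f v) = 0"
  by (simp add: sum_net_outflow finite_nodes tail_in_nodes head_in_nodes)

lemma pb_transshipment_iff: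
  "pb_transshipment V A tail head \<beta> r b f \<pi> \<longleftrightarrow>
     (\<forall>a\<in>A. f a = potential_flow \<pi> a) \<and> (\<forall>v\<in>V. net_outflow f v = b v)"
  unfolding pb_transshipment_def net_outflow_def potential_flow_def
  using arc_flow_eq_iff[OF resistance_pos degree_pos] by blast

lemma pb_transshipment_potential_flow:
  "pb_transshipment V A tail head \<beta> r (potential_outflow \<psi>) (potential_flow \<psi>) \<psi>"
  by (simp add: pb_transshipment_iff)

lemma pb_transshipment_supply:
  assumes "pb_transshipment V A tail head \<beta> r b f \<pi>" and "v \<in> V"
  shows "b v = potential_outflow \<pi> v"
  using assms net_outflow_cong[of f "potential_flow \<pi>" v] by (simp add: pb_transshipment_iff)

lemma potential_flow_mono:
  assumes "a \<in> A" and "\<psi> (tail a) - \<psi> (head a) \<le> \<psi>' (tail a) - \<psi>' (head a)"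
  shows "potential_flow \<psi> a \<le> potential_flow \<psi>' a"
  using assms by (simp add: potential_flow_def arc_flow_mono resistance_pos degree_pos)

lemma potential_outflow_comparison:
  assumes L: "L \<subseteq> V" and inside: "\<forall>v\<in>L. \<psi>1 v \<le> \<psi>2 v" and outside: "\<forall>v\<in>V - L. \<psi>2 v \<le> \<psi>1 v"
  shows "(\<Sum>v\<in>L. potential_outflow \<psi>1 v) \<le> (\<Sum>v\<in>L. potential_outflow \<psi>2 v)"
proof -
  have "finite L"
    using L finite_nodes by (rule finite_subset)
  show ?thesis
    unfolding sum_net_outflow[OF \<open>finite L\<close>]
  proof (rule sum_mono)
    fix a assume a: "a \<in> A"
    have tail: "if tail a \<in> L then \<psi>1 (tail a) \<le> \<psi>2 (tail a) else \<psi>2 (tail a) \<le> \<psi>1 (tail a)"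
      using a inside outside tail_in_nodes by auto
    have head: "if head a \<in> L then \<psi>1 (head a) \<le> \<psi>2 (head a) else \<psi>2 (head a) \<le> \<psi>1 (head a)"
      using a inside outside head_in_nodes by auto
    show "(if tail a \<in> L then potential_flow \<psi>1 a else 0) - (if head a \<in> L then potential_flow \<psi>1 a else 0)
        \<le> (if tail a \<in> L then potential_flow \<psi>2 a else 0) - (if head a \<in> L then potential_flow \<psi>2 a else 0)"
      using potential_flow_mono[OF a, of \<psi>1 \<psi>2] potential_flow_mono[OF a, of \<psi>2 \<psi>1] tail head
      by (cases "tail a \<in> L"; cases "head a \<in> L") auto
  qed
qed

lemma potential_outflow_antimono:
  assumes "w \<in> V" and "\<psi>1 w = \<psi>2 w" and "\<forall>u\<in>V. \<psi>1 u \<le> \<psi>2 u"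
  shows "potential_outflow \<psi>2 w \<le> potential_outflow \<psi>1 w"
  using assms potential_outflow_comparison[of "{w}" \<psi>2 \<psi>1] by simp

lemma potential_outflow_const: "potential_outflow (\<lambda>_. k) v = 0"
  by (simp add: net_outflow_def potential_flow_def)

lemma potential_outflow_nonneg_at_max:
  assumes "w \<in> V" and "\<forall>u\<in>V. \<psi> u \<le> \<psi> w"
  shows "0 \<le> potential_outflow \<psi> w"
  using assms potential_outflow_antimono[of w \<psi> "\<lambda>_. \<psi> w"] by (simp add: potential_outflow_const)

lemma potential_outflow_nonpos_at_min:
  assumes "w \<in> V" and "\<forall>u\<in>V. \<psi> w \<le> \<psi> u"
  shows "potential_outflow \<psi> w \<le> 0"
  using assms potential_outflow_antimono[of w "\<lambda>_. \<psi> w" \<psi>] by (simp add: potential_outflow_const)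

lemma continuous_on_potential_outflow:
  assumes "\<And>u. continuous_on S (\<lambda>x. P x u)"
  shows "continuous_on S (\<lambda>x. potential_outflow (P x) v)"
proof -
  have "continuous_on S (\<lambda>x. potential_flow (P x) a)" if "a \<in> A" for a
    unfolding potential_flow_def using assms
    by (intro continuous_on_compose2[OF continuous_on_arc_flow[OF resistance_pos[OF that] degree_pos]]
        continuous_intros) auto
  then show ?thesis
    unfolding net_outflow_def by (intro continuous_intros) auto
qed

lemma potential_outflow_scale:
  assumes "0 \<le> \<mu>"
  shows "potential_outflow (\<lambda>u. \<mu> powr r * \<psi> u) v = \<mu> * potential_outflow \<psi> v"
proof -
  have "potential_flow (\<lambda>u. \<mu> powr r * \<psi> u) a = \<mu> * potential_flow \<psi> a" if "a \<in> A" for a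
    using arc_flow_scale[OF resistance_pos[OF that] degree_pos assms]
    by (simp add: potential_flow_def flip: right_diff_distrib)
  then show ?thesis
    by (simp add: net_outflow_cong net_outflow_def sum_distrib_left right_diff_distrib)
qed

definition dirichlet_solution :: "'v set \<Rightarrow> 'v set \<Rightarrow> real \<Rightarrow> ('v \<Rightarrow> real) \<Rightarrow> bool" where
  "dirichlet_solution S D p \<phi> \<longleftrightarrow>
     (\<forall>v\<in>V. 0 \<le> \<phi> v \<and> \<phi> v \<le> p) \<and> (\<forall>v\<in>S. \<phi> v = p) \<and> (\<forall>v\<in>D. \<phi> v = 0) \<and>
     (\<forall>v\<in>V - S - D. potential_outflow \<phi> v = 0)"

lemma dirichlet_solution_source:
  assumes \<phi>: "dirichlet_solution S D p \<phi>" and v: "v \<in> V" and pos: "0 < potential_outflow \<phi> v"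
  shows "v \<in> S"
proof (rule ccontr)
  assume "v \<notin> S"
  show False
  proof (cases "v \<in> D")
    case True
    then have "\<forall>u\<in>V. \<phi> v \<le> \<phi> u"
      using \<phi> by (simp add: dirichlet_solution_def)
    with v have "potential_outflow \<phi> v \<le> 0"
      by (rule potential_outflow_nonpos_at_min)
    with pos show False
      by simp
  next
    case False
    then show False
      using \<phi> v pos \<open>v \<notin> S\<close> by (simp add: dirichlet_solution_def)
  qed
qed

lemma dirichlet_solution_sink:
  assumes \<phi>: "dirichlet_solution S D p \<phi>" and v: "v \<in> V" and neg: "potential_outflow \<phi> v < 0"
  shows "v \<in> D"
proof (rule ccontr)
  assume "v \<notin> D"
  show False
  proof (cases "v \<in> S")
    case True
    then have "\<forall>u\<in>V. \<phi> u \<le> \<phi> v"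
      using \<phi> by (simp add: dirichlet_solution_def)
    with v have "0 \<le> potential_outflow \<phi> v"
      by (rule potential_outflow_nonneg_at_max)
    with neg show False
      by simp
  next
    case False
    then show False
      using \<phi> v neg \<open>v \<notin> D\<close> by (simp add: dirichlet_solution_def)
  qed
qed

(* Outside V the box is {0}, so that the set of subsolutions is compact in the product topology. *)
definition dirichlet_box :: "'v set \<Rightarrow> 'v set \<Rightarrow> real \<Rightarrow> 'v \<Rightarrow> real set" where
  "dirichlet_box S D p v =
     (if v \<in> S then {p} else if v \<in> D then {0} else if v \<in> V then {0..p} else {0})"

definition subsolutions :: "'v set \<Rightarrow> 'v set \<Rightarrow> real \<Rightarrow> ('v \<Rightarrow> real) set" where
  "subsolutions S D p =
     Pi\<^sub>E UNIV (dirichlet_box S D p) \<inter> {\<psi>. \<forall>v\<in>V - S - D. potential_outflow \<psi> v \<le> 0}"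

lemma compact_subsolutions: "compact (subsolutions S D p)"
proof -
  have "closed {\<psi>. \<forall>v\<in>V - S - D. potential_outflow \<psi> v \<le> 0}"
    unfolding Collect_ball_eq
    by (intro closed_INT ballI closed_Collect_le continuous_on_potential_outflow continuous_on_const)
      simp
  then show ?thesis
    unfolding subsolutions_def
    by (intro compact_Int_closed compact_PiE_UNIV) (simp add: dirichlet_box_def)
qed

lemma indicator_subsolution:
  assumes "S \<inter> D = {}" and "0 \<le> p"
  shows "(\<lambda>u. if u \<in> S then p else 0) \<in> subsolutions S D p"
proof -
  have "potential_outflow (\<lambda>u. if u \<in> S then p else 0) v \<le> 0" if "v \<in> V - S - D" for v
    using that assms(2) by (intro potential_outflow_nonpos_at_min) auto
  then show ?thesis
    using assms by (auto simp: subsolutions_def dirichlet_box_def)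
qed

lemma potential_outflow_neg_small_raise:
  assumes neg: "potential_outflow \<psi> v < 0" and "\<delta> > 0"
  obtains e where "0 < e" "e \<le> \<delta>" "potential_outflow (\<psi>(v := \<psi> v + e)) v < 0"
proof -
  define h where "h e = potential_outflow (\<psi>(v := \<psi> v + e)) v" for e
  have "continuous_on UNIV (\<lambda>e. (\<psi>(v := \<psi> v + e)) u)" for u
    by (cases "u = v") (simp_all add: continuous_on_add)
  then have "continuous_on UNIV h"
    unfolding h_def by (rule continuous_on_potential_outflow)
  then have "(h \<longlongrightarrow> h 0) (at 0)"
    by (simp add: continuous_on_def)
  moreover have "h 0 < 0"
    using neg by (simp add: h_def)
  ultimately have "\<forall>\<^sub>F e in at 0. h e < 0"
    by (rule order_tendstoD(2))
  then obtain d where d: "d > 0" "\<And>e. e \<noteq> 0 \<Longrightarrow> dist e 0 < d \<Longrightarrow> h e < 0"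
    unfolding eventually_at by auto
  show thesis
    using d \<open>\<delta> > 0\<close> by (intro that[of "min (d / 2) \<delta>"]) (auto simp: h_def intro!: d(2))
qed

lemma subsolution_raise:
  assumes \<psi>: "\<psi> \<in> subsolutions S D p" and v: "v \<in> V - S - D"
    and neg: "potential_outflow \<psi> v < 0"
  shows "\<exists>e>0. \<psi>(v := \<psi> v + e) \<in> subsolutions S D p"
proof -
  have box: "\<And>u. \<psi> u \<in> dirichlet_box S D p u" and sub: "\<forall>w\<in>V - S - D. potential_outflow \<psi> w \<le> 0"
    using \<psi> by (auto simp: subsolutions_def)
  have "0 \<le> p"
    using box[of v] v by (auto simp: dirichlet_box_def)
  then have range: "0 \<le> \<psi> u \<and> \<psi> u \<le> p" if "u \<in> V" for u
    using that box[of u] by (auto simp: dirichlet_box_def split: if_splits)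
  have "\<psi> v \<noteq> p"
    using neg v range potential_outflow_nonneg_at_max[of v \<psi>] by force
  then have "p - \<psi> v > 0"
    using range v by force
  with neg obtain e where e: "0 < e" "e \<le> p - \<psi> v" "potential_outflow (\<psi>(v := \<psi> v + e)) v < 0"
    by (rule potential_outflow_neg_small_raise)
  have "potential_outflow (\<psi>(v := \<psi> v + e)) w \<le> 0" if w: "w \<in> V - S - D" for w
  proof (cases "w = v")
    case False
    then have "potential_outflow (\<psi>(v := \<psi> v + e)) w \<le> potential_outflow \<psi> w"
      using w e by (intro potential_outflow_antimono) auto
    also have "\<dots> \<le> 0"
      using sub w by blast
    finally show ?thesis .
  qed (use e in simp)
  moreover have "(\<psi>(v := \<psi> v + e)) u \<in> dirichlet_box S D p u" for u
    using box[of u] v e range[of v] by (auto simp: dirichlet_box_def split: if_splits)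
  ultimately show ?thesis
    using e by (auto simp: subsolutions_def)
qed

(* Perron's method: a subsolution maximising the total potential is a solution. *)
lemma dirichlet_solution_exists:
  assumes "S \<inter> D = {}" and "0 \<le> p"
  obtains \<phi> where "dirichlet_solution S D p \<phi>"
proof -
  have "subsolutions S D p \<noteq> {}"
    using indicator_subsolution[OF assms] by blast
  moreover have "continuous_on (subsolutions S D p) (\<lambda>\<psi>. \<Sum>u\<in>V. \<psi> u)"
    by (intro continuous_intros continuous_on_product_then_coordinatewise continuous_on_id)
  ultimately obtain \<phi> where \<phi>: "\<phi> \<in> subsolutions S D p"
    and max: "\<And>\<psi>. \<psi> \<in> subsolutions S D p \<Longrightarrow> (\<Sum>u\<in>V. \<psi> u) \<le> (\<Sum>u\<in>V. \<phi> u)"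
    using continuous_attains_sup[OF compact_subsolutions] by blast
  have box: "\<And>u. \<phi> u \<in> dirichlet_box S D p u" and sub: "\<forall>v\<in>V - S - D. potential_outflow \<phi> v \<le> 0"
    using \<phi> by (auto simp: subsolutions_def)
  have harmonic: "potential_outflow \<phi> v = 0" if v: "v \<in> V - S - D" for v
  proof (rule ccontr)
    assume "potential_outflow \<phi> v \<noteq> 0"
    with sub v have "potential_outflow \<phi> v < 0"
      by force
    then obtain e where e: "e > 0" "\<phi>(v := \<phi> v + e) \<in> subsolutions S D p"
      using subsolution_raise[OF \<phi> v] by blast
    have "(\<Sum>u\<in>V. (\<phi>(v := \<phi> v + e)) u) = (\<Sum>u\<in>V. \<phi> u + (if u = v then e else 0))"
      by (intro sum.cong) auto
    also have "\<dots> = (\<Sum>u\<in>V. \<phi> u) + e"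
      using v finite_nodes by (simp add: sum.distrib)
    finally show False
      using max[OF e(2)] e(1) by simp
  qed
  have "0 \<le> \<phi> v \<and> \<phi> v \<le> p" if "v \<in> V" for v
    using box[of v] assms(2) by (auto simp: dirichlet_box_def split: if_splits)
  moreover have "\<phi> v = p" if "v \<in> S" for v
    using box[of v] that by (simp add: dirichlet_box_def)
  moreover have "\<phi> v = 0" if "v \<in> D" for v
    using box[of v] that assms(1) by (auto simp: dirichlet_box_def split: if_splits)
  ultimately have "dirichlet_solution S D p \<phi>"
    using harmonic by (simp add: dirichlet_solution_def)
  then show ?thesis ..
qed

lemma supply_le_dirichlet_outflow:
  assumes TpV: "Tp \<subseteq> V" and TmV: "Tm \<subseteq> V" and b: "b \<in> B_T V Tp Tm" and XT: "X \<subseteq> Tp \<union> Tm"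
    and b_outflow: "\<forall>v\<in>V. b v = potential_outflow \<pi> v"
    and \<pi>: "\<forall>v\<in>V. 0 \<le> \<pi> v \<and> \<pi> v \<le> p"
    and \<phi>: "dirichlet_solution (Tp \<inter> X) (Tm - X) p \<phi>"
  shows "(\<Sum>v\<in>X. b v) \<le> (\<Sum>v\<in>Tp \<inter> X. potential_outflow \<phi> v)"
proof -
  define L where "L = {v\<in>V - (Tm - X). \<pi> v \<le> \<phi> v}"
  have LV: "L \<subseteq> V" and finL: "finite L"
    using finite_nodes by (auto simp: L_def)
  have SL: "Tp \<inter> X \<subseteq> L"
    using TpV \<pi> \<phi> by (auto simp: L_def dirichlet_solution_def)
  have "finite X"
    using XT TpV TmV finite_nodes by (meson finite_subset le_sup_iff)
  have "(\<Sum>v\<in>X. b v) \<le> (\<Sum>v\<in>L. b v)"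
    by (rule B_T_sum_le_sum[OF b finL \<open>finite X\<close> LV XT SL]) (auto simp: L_def)
  also have "\<dots> = (\<Sum>v\<in>L. potential_outflow \<pi> v)"
    using LV b_outflow by (intro sum.cong) auto
  also have "\<dots> \<le> (\<Sum>v\<in>L. potential_outflow \<phi> v)"
  proof (rule potential_outflow_comparison[OF LV])
    show "\<forall>v\<in>L. \<pi> v \<le> \<phi> v"
      by (simp add: L_def)
    have "\<phi> v \<le> \<pi> v" if "v \<in> V - L" for v
    proof (cases "v \<in> Tm - X")
      case True
      then show ?thesis
        using that \<pi> \<phi> by (simp add: dirichlet_solution_def)
    qed (use that in \<open>auto simp: L_def\<close>)
    then show "\<forall>v\<in>V - L. \<phi> v \<le> \<pi> v" ..
  qed
  also have "\<dots> = (\<Sum>v\<in>Tp \<inter> X. potential_outflow \<phi> v)"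
    using \<phi> by (intro sum.mono_neutral_right[OF finL SL]) (auto simp: L_def dirichlet_solution_def)
  finally show ?thesis .
qed

end

theorem theorem4:
  fixes V :: "'v set" and A :: "'e set" and tail head :: "'e \<Rightarrow> 'v"
    and \<beta> :: "'e \<Rightarrow> real" and r :: real
    and Tp Tm X :: "'v set" and b :: "'v \<Rightarrow> real"
    and f :: "'e \<Rightarrow> real" and \<pi> :: "'v \<Rightarrow> real" and \<pi>bar :: real
  assumes net: "pb_network V A tail head \<beta> r"
    and TpV: "Tp \<subseteq> V" and TmV: "Tm \<subseteq> V" and disj: "Tp \<inter> Tm = {}"
    and bB: "b \<in> B_T V Tp Tm"
    and flow: "pb_transshipment V A tail head \<beta> r b f \<pi>"
    and pibar: "\<pi>bar > 0"
    and pi_range: "\<forall>v\<in>V. 0 \<le> \<pi> v \<and> \<pi> v \<le> \<pi>bar"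
    and XT: "X \<subseteq> Tp \<union> Tm"
    and bX: "(\<Sum>v\<in>X. b v) \<ge> 0"
  shows "\<exists>b' f' \<pi>'. balanced V b' \<and> pb_transshipment V A tail head \<beta> r b' f' \<pi>' \<and>
           (\<forall>v\<in>V. 0 \<le> \<pi>' v \<and> \<pi>' v \<le> \<pi>bar) \<and>
           {v\<in>V. b' v > 0} \<subseteq> Tp \<inter> X \<and>
           {v\<in>V. b' v < 0} \<subseteq> Tm - X \<and>
           (\<Sum>v\<in>Tp \<inter> X. b' v) = (\<Sum>v\<in>X. b v)"
proof -
  interpret potential_network V A tail head \<beta> r
    using net by (rule pb_network_imp_potential_network)
  obtain \<phi> where \<phi>: "dirichlet_solution (Tp \<inter> X) (Tm - X) \<pi>bar \<phi>"
    using dirichlet_solution_exists[of "Tp \<inter> X" "Tm - X" \<pi>bar] pibar by auto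
  define c where "c = (\<Sum>v\<in>Tp \<inter> X. potential_outflow \<phi> v)"
  have "(\<Sum>v\<in>X. b v) \<le> c"
    unfolding c_def using pb_transshipment_supply[OF flow] pi_range \<phi>
    by (intro supply_le_dirichlet_outflow[OF TpV TmV bB XT]) auto
  define \<mu> where "\<mu> = (\<Sum>v\<in>X. b v) / c"
  have \<mu>: "0 \<le> \<mu>" "\<mu> \<le> 1" "\<mu> * c = (\<Sum>v\<in>X. b v)"
    using \<open>(\<Sum>v\<in>X. b v) \<le> c\<close> bX by (auto simp: \<mu>_def divide_le_eq_1)
  define \<pi>' where "\<pi>' v = \<mu> powr r * \<phi> v" for v
  have outflow': "potential_outflow \<pi>' v = \<mu> * potential_outflow \<phi> v" for v
    unfolding \<pi>'_def using \<mu>(1) by (rule potential_outflow_scale)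
  have "\<mu> powr r \<le> 1"
    using \<mu> degree_pos by (intro powr_le1) auto
  then have "\<forall>v\<in>V. 0 \<le> \<pi>' v \<and> \<pi>' v \<le> \<pi>bar"
    using \<phi> by (auto simp: \<pi>'_def dirichlet_solution_def intro!: order_trans[OF mult_left_le_one_le])
  moreover have "{v\<in>V. potential_outflow \<pi>' v > 0} \<subseteq> Tp \<inter> X" "{v\<in>V. potential_outflow \<pi>' v < 0} \<subseteq> Tm - X"
    using dirichlet_solution_source[OF \<phi>] dirichlet_solution_sink[OF \<phi>] \<mu>(1)
    by (auto simp: outflow' zero_less_mult_iff mult_less_0_iff)
  moreover have "(\<Sum>v\<in>Tp \<inter> X. potential_outflow \<pi>' v) = (\<Sum>v\<in>X. b v)"
    using \<mu>(3) by (simp add: outflow' c_def sum_distrib_left)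
  ultimately show ?thesis
    using pb_transshipment_potential_flow sum_net_outflow_nodes unfolding balanced_def by blast
qed

end
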